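(* Let $q$ be a prime power, let $G=\{g_1,\dots,g_n\}$ be a finite group of order $n$ (with this fixed ordering), let $v\in\mathbb{F}_qG$, and let $C(v)\subseteq\mathbb{F}_q^n$ be the row space of $\sigma_G(v)$. Suppose $|\mathrm{PAut}(C(v))|=n$ and $\pi\in\mathrm{PAut}(C(v))$ is of type $p$-$(c,f)$ with $p\neq1$. Then $f=0$; that is, $\pi$ has no fixed points (so $p$ is the order of $\pi$ and $n=pc$).
   Context: $\mathbb{F}_qG$ is the group ring; an element $v=\sum_i\alpha_{g_i}g_i$ is identified with the vector $(\alpha_{g_1},\dots,\alpha_{g_n})\in\mathbb{F}_q^n$. The group ring matrix $\sigma_G(v)$ is the $n\times n$ matrix whose $(i,j)$ entry is $\alpha_{g_i^{-1}g_j}$. For a code $\mathcal{C}\subseteq\mathbb{F}_q^n$, $\mathrm{PAut}(\mathcal{C})=\{\pi\in S_n:\pi(\mathcal{C})=\mathcal{C}\}$, where $S_n$ acts by permuting coordinates. A permutation $\pi\in S_n$ is of type $p$-$(c,f)$ if its disjoint cycle decomposition consists of exactly $c$ cycles of length $p$ and $f$ fixed points (and no other cycles). *)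

theory Defs
  imports "HOL-Algebra.Group" "HOL-Combinatorics.Permutations"
begin

text \<open>Vectors of F_q^n are functions nat => 'a that vanish outside {0..<n}.
  The group G is listed as g 0, ..., g (n-1) (a bijection {0..<n} -> carrier G).
  An element v of F_q G is its coefficient function v :: 'g => 'a.\<close>

definition group_ring_matrix :: "('g, 'b) monoid_scheme \<Rightarrow> (nat \<Rightarrow> 'g) \<Rightarrow> ('g \<Rightarrow> 'a) \<Rightarrow> nat \<Rightarrow> nat \<Rightarrow> 'a" where
  "group_ring_matrix G g v i j = v (inv\<^bsub>G\<^esub> (g i) \<otimes>\<^bsub>G\<^esub> g j)"

definition row_space :: "nat \<Rightarrow> (nat \<Rightarrow> nat \<Rightarrow> 'a::field) \<Rightarrow> (nat \<Rightarrow> 'a) set" where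
  "row_space n M = {x. \<exists>a :: nat \<Rightarrow> 'a. x = (\<lambda>j. if j < n then (\<Sum>i<n. a i * M i j) else 0)}"

definition perm_vec :: "(nat \<Rightarrow> nat) \<Rightarrow> (nat \<Rightarrow> 'a) \<Rightarrow> nat \<Rightarrow> 'a" where
  "perm_vec \<pi> x = (\<lambda>j. x (Hilbert_Choice.inv \<pi> j))"

definition PAut :: "nat \<Rightarrow> (nat \<Rightarrow> 'a) set \<Rightarrow> (nat \<Rightarrow> nat) set" where
  "PAut n C = {\<pi>. \<pi> permutes {0..<n} \<and> perm_vec \<pi> ` C = C}"

definition perm_orbit :: "(nat \<Rightarrow> nat) \<Rightarrow> nat \<Rightarrow> nat set" where
  "perm_orbit \<pi> i = {(\<pi> ^^ k) i | k. True}"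

definition perm_type :: "nat \<Rightarrow> (nat \<Rightarrow> nat) \<Rightarrow> nat \<Rightarrow> nat \<Rightarrow> nat \<Rightarrow> bool" where
  "perm_type n \<pi> p c f \<longleftrightarrow>
     \<pi> permutes {0..<n} \<and>
     (\<forall>i<n. card (perm_orbit \<pi> i) = 1 \<or> card (perm_orbit \<pi> i) = p) \<and>
     c = card {perm_orbit \<pi> i | i. i < n \<and> card (perm_orbit \<pi> i) = p} \<and>
     f = card {i. i < n \<and> \<pi> i = i}"

end

theory Submission
  imports Defs
begin

text \<open>Left multiplication by an element h of G permutes the coordinates, which are indexed by G,
  and leaves the group ring matrix invariant; hence it is a permutation automorphism of C(v).
  These n automorphisms are pairwise distinct, so when |PAut(C(v))| = n they are all of them.
  Thus \<pi> is either the identity, which has no cycle of length p \<noteq> 1 (contradicting c > 0),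
  or left multiplication by some h \<noteq> 1, which fixes no coordinate.\<close>

lemma perm_vec_row_space_subset:
  fixes M :: "nat \<Rightarrow> nat \<Rightarrow> 'a::field"
  assumes perm: "\<sigma> permutes {0..<n}"
    and invariant: "\<And>i k. i < n \<Longrightarrow> k < n \<Longrightarrow> M (\<sigma> i) (\<sigma> k) = M i k"
  shows "perm_vec \<sigma> ` row_space n M \<subseteq> row_space n M"
proof
  fix y assume "y \<in> perm_vec \<sigma> ` row_space n M"
  then obtain a where y: "y = perm_vec \<sigma> (\<lambda>j. if j < n then (\<Sum>i<n. a i * M i j) else 0)"
    unfolding row_space_def by auto
  have inv_perm: "Hilbert_Choice.inv \<sigma> permutes {0..<n}"
    using perm by (rule permutes_inv)
  have "y = (\<lambda>j. if j < n then (\<Sum>i<n. a (Hilbert_Choice.inv \<sigma> i) * M i j) else 0)"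
  proof (rule ext, cases)
    fix j
    assume "j < n"
    define k where "k = Hilbert_Choice.inv \<sigma> j"
    have k: "k < n" and \<sigma>k: "\<sigma> k = j"
      using permutes_in_image[OF inv_perm] permutes_inverses(1)[OF perm] \<open>j < n\<close> by (auto simp: k_def)
    have "y j = (\<Sum>i<n. a i * M i k)"
      using y k by (simp add: perm_vec_def k_def)
    also have "\<dots> = (\<Sum>i<n. a i * M (\<sigma> i) j)"
      using invariant k \<sigma>k by (intro sum.cong) auto
    also have "\<dots> = (\<Sum>i<n. (\<lambda>i. a (Hilbert_Choice.inv \<sigma> i) * M i j) (\<sigma> i))"
      using permutes_inverses(2)[OF perm] by simp
    also have "\<dots> = (\<Sum>i<n. a (Hilbert_Choice.inv \<sigma> i) * M i j)"
      using sum.permute[OF perm, of "\<lambda>i. a (Hilbert_Choice.inv \<sigma> i) * M i j"]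
      by (simp add: atLeast0LessThan comp_def)
    finally show "y j = (if j < n then (\<Sum>i<n. a (Hilbert_Choice.inv \<sigma> i) * M i j) else 0)"
      using \<open>j < n\<close> by simp
  next
    fix j
    assume "\<not> j < n"
    then have "Hilbert_Choice.inv \<sigma> j = j"
      using permutes_not_in[OF inv_perm] by auto
    then show "y j = (if j < n then (\<Sum>i<n. a (Hilbert_Choice.inv \<sigma> i) * M i j) else 0)"
      using \<open>\<not> j < n\<close> y by (simp add: perm_vec_def)
  qed
  then show "y \<in> row_space n M"
    unfolding row_space_def by (intro CollectI exI)
qed

lemma perm_vec_perm_vec_inv:
  assumes "\<sigma> permutes S"
  shows "perm_vec \<sigma> (perm_vec (Hilbert_Choice.inv \<sigma>) x) = x"
  using assms by (simp add: perm_vec_def permutes_inv_inv permutes_inverses)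

lemma PAut_row_spaceI:
  fixes M :: "nat \<Rightarrow> nat \<Rightarrow> 'a::field"
  assumes perm: "\<sigma> permutes {0..<n}"
    and invariant: "\<And>i k. i < n \<Longrightarrow> k < n \<Longrightarrow> M (\<sigma> i) (\<sigma> k) = M i k"
  shows "\<sigma> \<in> PAut n (row_space n M)"
proof -
  have inv_perm: "Hilbert_Choice.inv \<sigma> permutes {0..<n}"
    using perm by (rule permutes_inv)
  have "M (Hilbert_Choice.inv \<sigma> i) (Hilbert_Choice.inv \<sigma> k) = M i k" if "i < n" "k < n" for i k
    using invariant[of "Hilbert_Choice.inv \<sigma> i" "Hilbert_Choice.inv \<sigma> k"] that
      permutes_in_image[OF inv_perm] permutes_inverses(1)[OF perm] by simp
  then have inv_subset: "perm_vec (Hilbert_Choice.inv \<sigma>) ` row_space n M \<subseteq> row_space n M"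
    by (rule perm_vec_row_space_subset[OF inv_perm])
  have "row_space n M \<subseteq> perm_vec \<sigma> ` row_space n M"
  proof
    fix x assume "x \<in> row_space n M"
    then have "perm_vec (Hilbert_Choice.inv \<sigma>) x \<in> row_space n M"
      using inv_subset by blast
    then show "x \<in> perm_vec \<sigma> ` row_space n M"
      using perm_vec_perm_vec_inv[OF perm, of x] by (metis image_eqI)
  qed
  then show ?thesis
    using perm_vec_row_space_subset[of \<sigma> n M] perm invariant unfolding PAut_def by blast
qed

lemma perm_type_id_imp_no_cycles:
  assumes "perm_type n id p c f" and "p \<noteq> 1"
  shows "c = 0"
proof -
  have "perm_orbit id i = {i}" for i
    unfolding perm_orbit_def by simp
  then show ?thesis
    using assms unfolding perm_type_def by simp
qed

lemma perm_type_fixpoint_free: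
  assumes "perm_type n \<pi> p c f" and "\<forall>i<n. \<pi> i \<noteq> i"
  shows "f = 0"
  using assms by (simp add: perm_type_def)

definition translation_perm :: "nat \<Rightarrow> ('g, 'b) monoid_scheme \<Rightarrow> (nat \<Rightarrow> 'g) \<Rightarrow> 'g \<Rightarrow> nat \<Rightarrow> nat"
  where "translation_perm n G g h j = (if j < n then inv_into {0..<n} g (h \<otimes>\<^bsub>G\<^esub> g j) else j)"

locale enumerated_group = group G for G :: "('g, 'b) monoid_scheme" (structure) +
  fixes n :: nat and g :: "nat \<Rightarrow> 'g"
  assumes enumeration: "bij_betw g {0..<n} (carrier G)"
begin

lemma enum_closed [simp]: "j < n \<Longrightarrow> g j \<in> carrier G"
  using enumeration by (auto simp: bij_betw_def)

lemma enum_eq_iff [simp]: "i < n \<Longrightarrow> j < n \<Longrightarrow> g i = g j \<longleftrightarrow> i = j"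
  using enumeration by (auto simp: bij_betw_def inj_on_def)

lemma enum_surj: "x \<in> carrier G \<Longrightarrow> \<exists>k<n. g k = x"
  using enumeration by (force simp: bij_betw_def)

lemma enum_inv [simp]: "j < n \<Longrightarrow> inv_into {0..<n} g (g j) = j"
  using enumeration by (simp add: bij_betw_inv_into_left)

lemma card_carrier: "card (carrier G) = n"
  using bij_betw_same_card[OF enumeration] by simp

lemma enum_pos: "0 < n"
proof -
  have "finite (carrier G)"
    using bij_betw_finite[OF enumeration] by simp
  then show ?thesis
    using card_carrier one_closed by (metis card_gt_0_iff empty_iff)
qed

lemma translation_perm_simps [simp]:
  assumes "h \<in> carrier G" and "j < n"
  shows "translation_perm n G g h j < n"
    and "g (translation_perm n G g h j) = h \<otimes> g j"
proof -
  obtain k where k: "k < n" "g k = h \<otimes> g j"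
    using enum_surj[of "h \<otimes> g j"] assms by auto
  then have "translation_perm n G g h j = k"
    using assms by (metis enum_inv translation_perm_def)
  with k show "translation_perm n G g h j < n" and "g (translation_perm n G g h j) = h \<otimes> g j"
    by simp_all
qed

lemma translation_perm_permutes:
  assumes h: "h \<in> carrier G"
  shows "translation_perm n G g h permutes {0..<n}"
proof (rule bij_imp_permutes)
  have "inj_on (translation_perm n G g h) {0..<n}"
  proof (rule inj_onI)
    fix i j
    assume "i \<in> {0..<n}" "j \<in> {0..<n}" and "translation_perm n G g h i = translation_perm n G g h j"
    then have "h \<otimes> g i = h \<otimes> g j"
      using h by (metis atLeastLessThan_iff translation_perm_simps(2))
    with h \<open>i \<in> {0..<n}\<close> \<open>j \<in> {0..<n}\<close> show "i = j"
      by simp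
  qed
  moreover have "translation_perm n G g h ` {0..<n} \<subseteq> {0..<n}"
    using h by auto
  ultimately show "bij_betw (translation_perm n G g h) {0..<n} {0..<n}"
    by (simp add: bij_betw_def endo_inj_surj)
  show "translation_perm n G g h j = j" if "j \<notin> {0..<n}" for j
    using that by (simp add: translation_perm_def)
qed

lemma translation_perm_one: "translation_perm n G g \<one> = id"
  by (auto simp: translation_perm_def)

lemma translation_perm_fixpoint:
  assumes "h \<in> carrier G" and "j < n" and "translation_perm n G g h j = j"
  shows "h = \<one>"
  using assms by (metis enum_closed r_cancel_one translation_perm_simps(2))

lemma inj_on_translation_perm: "inj_on (translation_perm n G g) (carrier G)"
proof (rule inj_onI)
  fix h h'
  assume h: "h \<in> carrier G" "h' \<in> carrier G" and "translation_perm n G g h = translation_perm n G g h'"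
  then have "h \<otimes> g 0 = h' \<otimes> g 0"
    using enum_pos by (metis translation_perm_simps(2))
  with h enum_pos show "h = h'"
    by simp
qed

lemma group_ring_matrix_translation_invariant:
  assumes "h \<in> carrier G" and "i < n" and "k < n"
  shows "group_ring_matrix G g v (translation_perm n G g h i) (translation_perm n G g h k)
    = group_ring_matrix G g v i k"
  using assms by (simp add: group_ring_matrix_def inv_mult_group m_assoc[symmetric]) (simp add: m_assoc)

lemma translation_perm_PAut:
  "h \<in> carrier G \<Longrightarrow> translation_perm n G g h \<in> PAut n (row_space n (group_ring_matrix G g v))"
  by (intro PAut_row_spaceI translation_perm_permutes group_ring_matrix_translation_invariant)

lemma PAut_eq_translations:
  assumes "card (PAut n (row_space n (group_ring_matrix G g v))) = n"
  shows "PAut n (row_space n (group_ring_matrix G g v)) = translation_perm n G g ` carrier G"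
proof (rule sym, rule card_subset_eq)
  show "finite (PAut n (row_space n (group_ring_matrix G g v)))"
    using assms enum_pos card_ge_0_finite by metis
  show "translation_perm n G g ` carrier G \<subseteq> PAut n (row_space n (group_ring_matrix G g v))"
    using translation_perm_PAut by blast
  show "card (translation_perm n G g ` carrier G) = card (PAut n (row_space n (group_ring_matrix G g v)))"
    using assms card_carrier inj_on_translation_perm by (simp add: card_image)
qed

end

theorem theorem4p2:
  fixes G :: "('g, 'b) monoid_scheme" and g :: "nat \<Rightarrow> 'g"
    and v :: "'g \<Rightarrow> 'a :: {finite, field}"
    and n p c f :: nat and \<pi> :: "nat \<Rightarrow> nat"
  assumes "group G" and "finite (carrier G)" and "n = card (carrier G)"
    and "bij_betw g {0..<n} (carrier G)"
    and "card (PAut n (row_space n (group_ring_matrix G g v))) = n"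
    and "\<pi> \<in> PAut n (row_space n (group_ring_matrix G g v))"
    and "perm_type n \<pi> p c f" and "p \<noteq> 1" and "0 < c"
  shows "f = 0"
proof -
  interpret enumerated_group G n g
    by (intro enumerated_group.intro enumerated_group_axioms.intro assms)
  obtain h where h: "h \<in> carrier G" and \<pi>: "\<pi> = translation_perm n G g h"
    using assms(5,6) PAut_eq_translations by auto
  show ?thesis
  proof (cases "h = \<one>\<^bsub>G\<^esub>")
    case True
    then have "c = 0"
      using assms(7,8) \<pi> translation_perm_one perm_type_id_imp_no_cycles by simp
    with assms(9) show ?thesis
      by simp
  next
    case False
    then have "\<forall>i<n. \<pi> i \<noteq> i"
      using \<pi> h translation_perm_fixpoint by blast
    with assms(7) show ?thesis
      by (rule perm_type_fixpoint_free)
  qed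
qed

end
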